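(* Let $a,b,c>0$ be constants. For given constants $y_0>0$ and $z_0>0$ consider the free boundary problem of finding $\hat{x}>0$ and a function $y$ on $[0,\hat x]$ with \[ b y' - a y'' - c = 0 \ \ (0<x<\hat{x}),\qquad y(\hat{x})=0,\qquad y(0)=-y_0,\qquad y'(\hat{x})=z_0 . \] Then there exists a unique such pair $(y,\hat{x})$ with $\hat x>0$. Moreover, $\hat{x}=\hat{x}(y_0,z_0)$ is strictly increasing in $y_0$ and strictly decreasing in $z_0$, and there is $\hat{x}_c(y_0)>0$ such that \[ \lim_{y_0\to\infty}\hat{x}(y_0,z_0)=\infty,\quad \lim_{y_0\downarrow 0}\hat{x}(y_0,z_0)=0\quad\text{for every } z_0>0, \] \[ \lim_{z_0\to\infty}\hat{x}(y_0,z_0)=0,\quad \lim_{z_0\downarrow 0}\hat{x}(y_0,z_0)=\hat{x}_c(y_0)\quad\text{for every } y_0>0 . \] The function $\hat{x}_c$ is strictly increasing with $\lim_{y_0\to 0}\hat{x}_c(y_0)=0$ and $\lim_{y_0\to\infty}\hat{x}_c(y_0)=\infty$. All dependences on $y_0$ and $z_0$ are analytic. *)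

theory Defs
  imports "HOL-Analysis.Analysis"
begin

definition fbp_solution ::
  "real \<Rightarrow> real \<Rightarrow> real \<Rightarrow> real \<Rightarrow> real \<Rightarrow> (real \<Rightarrow> real) \<Rightarrow> real \<Rightarrow> bool" where
  "fbp_solution a b c y0 z0 y xh \<longleftrightarrow>
     xh > 0 \<and>
     (\<exists>y' y''.
        (\<forall>x\<in>{0..xh}. (y has_real_derivative y' x) (at x within {0..xh})) \<and>
        (\<forall>x\<in>{0<..<xh}. (y' has_real_derivative y'' x) (at x)) \<and>
        (\<forall>x\<in>{0<..<xh}. b * y' x - a * y'' x - c = 0) \<and>
        y xh = 0 \<and> y 0 = - y0 \<and> y' xh = z0)"

definition xhat :: "real \<Rightarrow> real \<Rightarrow> real \<Rightarrow> real \<Rightarrow> real \<Rightarrow> real" where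
  "xhat a b c y0 z0 = (THE xh. \<exists>y. fbp_solution a b c y0 z0 y xh)"

definition real_analytic_on :: "(real \<Rightarrow> real) \<Rightarrow> real set \<Rightarrow> bool" where
  "real_analytic_on f S \<longleftrightarrow>
     (\<forall>x\<in>S. \<exists>r>0. \<exists>coef :: nat \<Rightarrow> real.
        \<forall>h. \<bar>h\<bar> < r \<longrightarrow> ((\<lambda>n. coef n * h ^ n) has_sum f (x + h)) UNIV)"

text \<open>Joint real analyticity in two variables on a set S (local convergent double power
  series; unconditional summation over nat \<times> nat, i.e. absolute convergence for reals).\<close>
definition real_analytic2_on :: "(real \<Rightarrow> real \<Rightarrow> real) \<Rightarrow> (real \<times> real) set \<Rightarrow> bool" where
  "real_analytic2_on f S \<longleftrightarrow>
     (\<forall>(x, y)\<in>S. \<exists>r>0. \<exists>coef :: nat \<Rightarrow> nat \<Rightarrow> real.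
        \<forall>h k. \<bar>h\<bar> < r \<and> \<bar>k\<bar> < r \<longrightarrow>
          ((\<lambda>(m, n). coef m n * h ^ m * k ^ n) has_sum f (x + h) (y + k)) UNIV)"

end

theory Submission
  imports Defs "HOL-Complex_Analysis.Complex_Analysis"
begin

text \<open>With \<open>\<alpha> = c / b\<close> and \<open>\<kappa> = b / a\<close> the equation reads \<open>y'' = \<kappa> (y' - \<alpha>)\<close>, so
  \<open>y' x = \<alpha> + (z0 - \<alpha>) exp (\<kappa> (x - x\<^sub>h))\<close>, and the two remaining boundary conditions reduce to
  the scalar equation \<open>y0 = \<alpha> (x\<^sub>h - \<phi> x\<^sub>h) + z0 \<phi> x\<^sub>h\<close> with \<open>\<phi> x = (1 - exp (-\<kappa> x)) / \<kappa>\<close>.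
  For \<open>z0 \<ge> 0\<close> its right-hand side increases strictly from \<open>0\<close> to \<open>\<infinity>\<close> in \<open>x\<^sub>h\<close> and increases
  in \<open>z0\<close>; this gives existence, uniqueness, monotonicity and all the limits, the critical free
  boundary being the root for \<open>z0 = 0\<close>.

  Joint analyticity comes from a holomorphic implicit function theorem: if \<open>A\<close> and \<open>Q\<close> are entire
  and \<open>x\<close> is the simple root of \<open>A + k Q - h\<close> near a simple zero of \<open>A\<close>, then
  \<open>x = (2 \<pi> i)\<^sup>-\<^sup>1 \<ointegral> w (A' w + k Q' w) / (A w + k Q w - h) dw\<close> over a small circle, and
  expanding \<open>1 / (A w + k Q w - h)\<close> as a geometric series in \<open>(h - k Q w) / A w\<close> gives an
  absolutely convergent double power series in \<open>h\<close> and \<open>k\<close>.\<close>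

section \<open>Double power series\<close>

lemma bij_betw_antidiagonal:
  "bij_betw (\<lambda>(N, i). (i, N - i)) (SIGMA N:UNIV. {..N}) (UNIV :: (nat \<times> nat) set)"
  by (rule bij_betwI[where g = "\<lambda>(i, j). (i + j, i)"]) auto

lemma has_sum_imp_sums_antidiagonal:
  fixes g :: "nat \<times> nat \<Rightarrow> 'a::banach"
  assumes "(g has_sum S) UNIV"
  shows "(\<lambda>N. \<Sum>i\<le>N. g (i, N - i)) sums S"
proof -
  have "((\<lambda>p. g ((\<lambda>(N, i). (i, N - i)) p)) has_sum S) (SIGMA N:UNIV. {..N})"
    using has_sum_reindex_bij_betw[OF bij_betw_antidiagonal] assms by blast
  then have "((\<lambda>N. \<Sum>i\<le>N. g (i, N - i)) has_sum S) UNIV"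
    by (rule has_sum_SigmaD) auto
  then show ?thesis by (rule has_sum_imp_sums)
qed

lemma binomial_double_summable:
  fixes a b :: real
  assumes "0 \<le> a" "0 \<le> b" "a + b < 1"
  shows "(\<lambda>(i, j). real ((i + j) choose i) * a ^ i * b ^ j) summable_on UNIV"
proof -
  let ?f = "\<lambda>(i, j). real ((i + j) choose i) * a ^ i * b ^ j"
  have antidiagonal: "((\<lambda>i. ?f (i, N - i)) has_sum (a + b) ^ N) {..N}" for N
  proof -
    have "(a + b) ^ N = (\<Sum>i\<le>N. ?f (i, N - i))"
      by (simp add: binomial_ring)
    then show ?thesis by (simp add: has_sum_finiteI)
  qed
  have "(\<lambda>N. (a + b) ^ N) summable_on UNIV"
    using assms by (intro norm_summable_imp_summable_on summable_geometric) auto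
  then have "(\<lambda>p. ?f ((\<lambda>(N, i). (i, N - i)) p)) summable_on (SIGMA N:UNIV. {..N})"
    using antidiagonal
    by (intro summable_on_SigmaI[where g = "\<lambda>N. (a + b) ^ N"]) (auto simp: assms)
  then show ?thesis
    using bij_betw_antidiagonal summable_on_reindex_bij_betw by blast
qed

lemma has_sum_double_series_snd_zero:
  fixes coef :: "nat \<Rightarrow> nat \<Rightarrow> real"
  assumes "((\<lambda>(m, n). coef m n * h ^ m * 0 ^ n) has_sum s) UNIV"
  shows "((\<lambda>m. coef m 0 * h ^ m) has_sum s) UNIV"
proof -
  let ?g = "\<lambda>(m, n). coef m n * h ^ m * (0::real) ^ n"
  have "(?g has_sum s) (range (\<lambda>m. (m, 0)))"
    by (rule has_sum_cong_neutral[THEN iffD1, OF _ _ _ assms]) auto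
  then have "((?g \<circ> (\<lambda>m. (m, 0))) has_sum s) UNIV"
    by (subst has_sum_reindex[symmetric]) (auto simp: inj_on_def)
  then show ?thesis by (simp add: o_def)
qed

lemma has_sum_double_series_shift_snd:
  fixes c :: "nat \<Rightarrow> nat \<Rightarrow> 'a::real_normed_field"
  assumes "((\<lambda>(i, j). c i j * h ^ i * k ^ j) has_sum S) UNIV"
  shows "((\<lambda>(i, j). (if j = 0 then 0 else c i (j - 1)) * h ^ i * k ^ j) has_sum k * S) UNIV"
proof -
  let ?g = "\<lambda>(i, j). (if j = 0 then 0 else c i (j - 1)) * h ^ i * k ^ j"
  have "((\<lambda>p. k * (case p of (i, j) \<Rightarrow> c i j * h ^ i * k ^ j)) has_sum k * S) UNIV"
    by (rule has_sum_cmult_right[OF assms])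
  then have "((?g \<circ> (\<lambda>(i, j). (i, Suc j))) has_sum k * S) UNIV"
    by (rule has_sum_cong[THEN iffD1, rotated]) (auto simp: algebra_simps)
  then have "(?g has_sum k * S) (range (\<lambda>(i, j). (i, Suc j)))"
    by (subst has_sum_reindex) (auto simp: inj_on_def)
  then show ?thesis
  proof (rule has_sum_cong_neutral[THEN iffD1, rotated -1])
    fix p :: "nat \<times> nat" assume "p \<in> UNIV - range (\<lambda>(i, j). (i, Suc j))"
    then show "?g p = 0"
      by (cases p; cases "snd p") (auto simp: image_iff)
  qed auto
qed

lemma has_sum_Re_double_series:
  fixes c :: "nat \<Rightarrow> nat \<Rightarrow> complex"
  assumes "((\<lambda>(i, j). c i j * of_real h ^ i * of_real k ^ j) has_sum of_real x) UNIV"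
  shows "((\<lambda>(i, j). Re (c i j) * h ^ i * k ^ j) has_sum x) UNIV"
  using has_sum_Re[OF assms] by (simp add: case_prod_unfold flip: of_real_power)

section \<open>Expanding a contour integral in two parameters\<close>

locale circle_expansion =
  fixes f A Q :: "complex \<Rightarrow> complex" and z :: complex and r m M :: real
  assumes r_pos: "0 < r" and m_pos: "0 < m"
    and continuous_f: "continuous_on (sphere z r) f"
    and continuous_A: "continuous_on (sphere z r) A"
    and continuous_Q: "continuous_on (sphere z r) Q"
    and A_lower: "\<And>w. w \<in> sphere z r \<Longrightarrow> m \<le> norm (A w)"
    and Q_upper: "\<And>w. w \<in> sphere z r \<Longrightarrow> norm (Q w) \<le> M"
begin

text \<open>The coefficient of \<open>h\<^sup>i k\<^sup>j\<close> in \<open>\<ointegral> f / (A + k Q - h)\<close>, obtained from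
  \<open>1 / (A + k Q - h) = (\<Sum>N. (h - k Q)\<^sup>N / A\<^sup>N\<^sup>+\<^sup>1)\<close> and the binomial theorem.\<close>

definition expansion_coeff :: "nat \<Rightarrow> nat \<Rightarrow> complex" where
  "expansion_coeff i j = of_nat ((i + j) choose i) *
     contour_integral (circlepath z r) (\<lambda>w. f w * (- Q w) ^ j / A w ^ (i + j + 1))"

lemma M_nonneg: "0 \<le> M"
proof -
  have "z + of_real r \<in> sphere z r" using r_pos by (simp add: dist_norm)
  then show ?thesis using Q_upper norm_ge_zero order_trans by blast
qed

lemma A_nonzero: "w \<in> sphere z r \<Longrightarrow> A w \<noteq> 0"
  using A_lower m_pos by fastforce

lemma f_bounded:
  obtains B where "B > 0" "\<And>w. w \<in> sphere z r \<Longrightarrow> norm (f w) \<le> B"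
proof -
  have "bounded (f ` sphere z r)"
    by (intro compact_imp_bounded compact_continuous_image continuous_f compact_sphere)
  then show ?thesis using that unfolding bounded_pos by auto
qed

lemma contour_integrable_quotient_power:
  assumes "continuous_on (sphere z r) P"
  shows "(\<lambda>w. f w * P w / A w ^ n) contour_integrable_on (circlepath z r)"
  using r_pos assms
  by (intro contour_integrable_continuous_circlepath)
     (auto intro!: continuous_intros continuous_f continuous_A simp: A_nonzero)

lemma geometric_expansion_uniform_limit:
  assumes hk: "norm h + M * norm k < m"
  shows "uniform_limit (sphere z r) (\<lambda>n w. \<Sum>N<n. f w * (h - k * Q w) ^ N / A w ^ (N + 1))
           (\<lambda>w. f w / (A w + k * Q w - h)) sequentially"
proof -
  obtain B where B: "B > 0" "\<And>w. w \<in> sphere z r \<Longrightarrow> norm (f w) \<le> B"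
    using f_bounded by blast
  define q where "q = (norm h + M * norm k) / m"
  define T where "T = (\<lambda>N w. f w * (h - k * Q w) ^ N / A w ^ (N + 1))"
  have q: "0 \<le> q" "q < 1"
    using M_nonneg m_pos hk by (auto simp: q_def)
  have ratio_le: "norm ((h - k * Q w) / A w) \<le> q" if w: "w \<in> sphere z r" for w
  proof -
    have "norm (h - k * Q w) \<le> norm h + M * norm k"
      using Q_upper[OF w] norm_triangle_ineq4[of h "k * Q w"]
      by (simp add: norm_mult) (metis mult.commute mult_left_mono norm_ge_zero order_trans add_left_mono)
    then show ?thesis
      using A_lower[OF w] m_pos M_nonneg unfolding q_def norm_divide
      by (intro frac_le) auto
  qed
  have T_eq: "T N w = f w / A w * ((h - k * Q w) / A w) ^ N" if "w \<in> sphere z r" for N w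
    by (simp add: T_def power_divide field_simps)
  have T_le: "norm (T N w) \<le> B / m * q ^ N" if w: "w \<in> sphere z r" for N w
  proof -
    have "norm (f w / A w) \<le> B / m"
      unfolding norm_divide using B A_lower[OF w] m_pos w by (intro frac_le) auto
    then show ?thesis
      unfolding T_eq[OF w] norm_mult norm_power
      using ratio_le[OF w] q B(1) m_pos by (intro mult_mono power_mono) auto
  qed
  have T_sums: "(\<lambda>N. T N w) sums (f w / (A w + k * Q w - h))" if w: "w \<in> sphere z r" for w
  proof -
    have "(\<lambda>N. f w / A w * ((h - k * Q w) / A w) ^ N) sums (f w / A w * (1 / (1 - (h - k * Q w) / A w)))"
      using ratio_le[OF w] q by (intro sums_mult geometric_sums) auto
    moreover have "f w / A w * (1 / (1 - (h - k * Q w) / A w)) = f w / (A w + k * Q w - h)"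
      using A_nonzero[OF w] by (simp add: field_simps)
    moreover have "(\<lambda>N. T N w) = (\<lambda>N. f w / A w * ((h - k * Q w) / A w) ^ N)"
      using T_eq[OF w] by blast
    ultimately show ?thesis by metis
  qed
  have "uniform_limit (sphere z r) (\<lambda>n w. \<Sum>N<n. T N w) (\<lambda>w. \<Sum>N. T N w) sequentially"
    by (rule Weierstrass_m_test[where M = "\<lambda>N. B / m * q ^ N"])
       (use T_le q in \<open>auto intro!: summable_mult summable_geometric\<close>)
  then have "uniform_limit (sphere z r) (\<lambda>n w. \<Sum>N<n. T N w) (\<lambda>w. f w / (A w + k * Q w - h)) sequentially"
    by (rule uniform_limit_cong'[THEN iffD1, rotated -1]) (simp_all add: sums_unique[OF T_sums, symmetric])
  then show ?thesis
    unfolding T_def .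
qed

lemma geometric_expansion_sums:
  assumes hk: "norm h + M * norm k < m"
  shows "(\<lambda>N. contour_integral (circlepath z r) (\<lambda>w. f w * (h - k * Q w) ^ N / A w ^ (N + 1)))
           sums contour_integral (circlepath z r) (\<lambda>w. f w / (A w + k * Q w - h))"
proof -
  define T where "T = (\<lambda>N w. f w * (h - k * Q w) ^ N / A w ^ (N + 1))"
  have T_integrable: "T N contour_integrable_on (circlepath z r)" for N
    unfolding T_def
    by (intro contour_integrable_quotient_power continuous_intros continuous_Q)
  have "uniform_limit (sphere z r) (\<lambda>n w. \<Sum>N<n. T N w) (\<lambda>w. f w / (A w + k * Q w - h)) sequentially"
    using geometric_expansion_uniform_limit[OF hk] unfolding T_def .
  then have "(\<lambda>n. contour_integral (circlepath z r) (\<lambda>w. \<Sum>N<n. T N w))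
      \<longlonglongrightarrow> contour_integral (circlepath z r) (\<lambda>w. f w / (A w + k * Q w - h))"
    by (intro contour_integral_uniform_limit_circlepath[OF _ _ _ r_pos])
       (auto intro!: contour_integrable_sum always_eventually T_integrable)
  then have "(\<lambda>n. \<Sum>N<n. contour_integral (circlepath z r) (T N))
      \<longlonglongrightarrow> contour_integral (circlepath z r) (\<lambda>w. f w / (A w + k * Q w - h))"
    by (simp add: contour_integral_sum T_integrable)
  then show ?thesis
    unfolding sums_def T_def .
qed

lemma binomial_expansion:
  "contour_integral (circlepath z r) (\<lambda>w. f w * (h - k * Q w) ^ N / A w ^ (N + 1))
     = (\<Sum>i\<le>N. expansion_coeff i (N - i) * h ^ i * k ^ (N - i))"
proof -
  let ?I = "\<lambda>j. contour_integral (circlepath z r) (\<lambda>w. f w * (- Q w) ^ j / A w ^ (N + 1))"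
  have integrable: "(\<lambda>w. f w * (- Q w) ^ j / A w ^ (N + 1)) contour_integrable_on circlepath z r" for j
    by (intro contour_integrable_quotient_power continuous_intros continuous_Q)
  have "(\<lambda>w. f w * (h - k * Q w) ^ N / A w ^ (N + 1))
      = (\<lambda>w. \<Sum>i\<le>N. (of_nat (N choose i) * h ^ i * k ^ (N - i)) * (f w * (- Q w) ^ (N - i) / A w ^ (N + 1)))"
  proof
    fix w
    have "(h - k * Q w) ^ N = (h + k * - Q w) ^ N" by simp
    also have "\<dots> = (\<Sum>i\<le>N. of_nat (N choose i) * h ^ i * (k ^ (N - i) * (- Q w) ^ (N - i)))"
      by (simp only: binomial_ring power_mult_distrib)
    finally show "f w * (h - k * Q w) ^ N / A w ^ (N + 1)
        = (\<Sum>i\<le>N. (of_nat (N choose i) * h ^ i * k ^ (N - i)) * (f w * (- Q w) ^ (N - i) / A w ^ (N + 1)))"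
      by (simp add: sum_distrib_left sum_divide_distrib del: power_minus_odd power_minus_even)
         (simp add: algebra_simps)
  qed
  then have "contour_integral (circlepath z r) (\<lambda>w. f w * (h - k * Q w) ^ N / A w ^ (N + 1))
      = (\<Sum>i\<le>N. contour_integral (circlepath z r)
           (\<lambda>w. (of_nat (N choose i) * h ^ i * k ^ (N - i)) * (f w * (- Q w) ^ (N - i) / A w ^ (N + 1))))"
    by (simp only:) (rule contour_integral_sum[OF finite_atMost contour_integrable_lmul[OF integrable]])
  also have "\<dots> = (\<Sum>i\<le>N. (of_nat (N choose i) * h ^ i * k ^ (N - i)) * ?I (N - i))"
    by (intro sum.cong refl contour_integral_lmul integrable)
  also have "\<dots> = (\<Sum>i\<le>N. expansion_coeff i (N - i) * h ^ i * k ^ (N - i))"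
    by (intro sum.cong) (auto simp: expansion_coeff_def)
  finally show ?thesis .
qed

lemma expansion_coeff_norm_le:
  assumes B: "\<And>w. w \<in> sphere z r \<Longrightarrow> norm (f w) \<le> B" and "0 \<le> B"
  shows "norm (expansion_coeff i j) \<le> B * (2 * pi * r) / m * (real ((i + j) choose i) * (1 / m) ^ i * (M / m) ^ j)"
proof -
  have "norm (contour_integral (circlepath z r) (\<lambda>w. f w * (- Q w) ^ j / A w ^ (i + j + 1)))
      \<le> B * M ^ j / m ^ (i + j + 1) * (2 * pi * r)"
  proof (rule has_contour_integral_bound_circlepath[OF has_contour_integral_integral])
    show "(\<lambda>w. f w * (- Q w) ^ j / A w ^ (i + j + 1)) contour_integrable_on circlepath z r"
      by (intro contour_integrable_quotient_power continuous_intros continuous_Q)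
    fix w assume "norm (w - z) = r"
    then have w: "w \<in> sphere z r" by (simp add: dist_norm norm_minus_commute)
    show "norm (f w * (- Q w) ^ j / A w ^ (i + j + 1)) \<le> B * M ^ j / m ^ (i + j + 1)"
      unfolding norm_mult norm_divide norm_power norm_minus_cancel
      using B[OF w] Q_upper[OF w] A_lower[OF w] m_pos M_nonneg \<open>0 \<le> B\<close>
      by (intro frac_le mult_mono power_mono) auto
  qed (use r_pos m_pos M_nonneg \<open>0 \<le> B\<close> in auto)
  then show ?thesis
    using m_pos
    by (simp add: expansion_coeff_def norm_mult power_divide power_add field_simps)
qed

lemma expansion_summable:
  assumes hk: "norm h + M * norm k < m"
  shows "(\<lambda>(i, j). expansion_coeff i j * h ^ i * k ^ j) summable_on UNIV"
proof (rule abs_summable_summable)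
  obtain B where B: "B > 0" "\<And>w. w \<in> sphere z r \<Longrightarrow> norm (f w) \<le> B"
    using f_bounded by blast
  let ?a = "norm h / m" and ?b = "M * norm k / m"
  have "(\<lambda>(i, j). real ((i + j) choose i) * ?a ^ i * ?b ^ j) summable_on UNIV"
    using m_pos M_nonneg hk by (intro binomial_double_summable) (auto simp: add_divide_distrib[symmetric])
  then have "(\<lambda>p. B * (2 * pi * r) / m * (case p of (i, j) \<Rightarrow> real ((i + j) choose i) * ?a ^ i * ?b ^ j))
      summable_on UNIV"
    by (rule summable_on_cmult_right)
  then show "(\<lambda>p. norm (case p of (i, j) \<Rightarrow> expansion_coeff i j * h ^ i * k ^ j)) summable_on UNIV"
  proof (rule summable_on_comparison_test)
    fix p :: "nat \<times> nat"
    obtain i j where p: "p = (i, j)" by fastforce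
    have "norm (expansion_coeff i j * h ^ i * k ^ j)
        \<le> B * (2 * pi * r) / m * (real ((i + j) choose i) * (1 / m) ^ i * (M / m) ^ j) * norm h ^ i * norm k ^ j"
      unfolding norm_mult norm_power
      using expansion_coeff_norm_le[OF B(2)] B(1) by (intro mult_right_mono) auto
    also have "\<dots> = B * (2 * pi * r) / m * (real ((i + j) choose i) * ?a ^ i * ?b ^ j)"
      by (simp add: power_divide power_mult_distrib)
    finally show "norm (case p of (i, j) \<Rightarrow> expansion_coeff i j * h ^ i * k ^ j)
        \<le> B * (2 * pi * r) / m * (case p of (i, j) \<Rightarrow> real ((i + j) choose i) * ?a ^ i * ?b ^ j)"
      by (simp add: p)
  qed simp
qed

theorem has_sum_expansion:
  assumes hk: "norm h + M * norm k < m"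
  shows "((\<lambda>(i, j). expansion_coeff i j * h ^ i * k ^ j)
           has_sum contour_integral (circlepath z r) (\<lambda>w. f w / (A w + k * Q w - h))) UNIV"
proof -
  let ?g = "\<lambda>(i, j). expansion_coeff i j * h ^ i * k ^ j"
  have "(\<lambda>N. \<Sum>i\<le>N. ?g (i, N - i)) sums infsum ?g UNIV"
    by (rule has_sum_imp_sums_antidiagonal[OF has_sum_infsum[OF expansion_summable[OF hk]]])
  moreover have "(\<lambda>N. \<Sum>i\<le>N. ?g (i, N - i))
      = (\<lambda>N. contour_integral (circlepath z r) (\<lambda>w. f w * (h - k * Q w) ^ N / A w ^ (N + 1)))"
    by (simp only: binomial_expansion prod.case)
  moreover note geometric_expansion_sums[OF hk]
  ultimately show ?thesis
    using has_sum_infsum[OF expansion_summable[OF hk]] sums_unique2 by (metis (no_types, lifting))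
qed

end

section \<open>A holomorphic implicit function theorem\<close>

lemma compact_norm_lower_bound:
  fixes f :: "'a::topological_space \<Rightarrow> 'b::real_normed_vector"
  assumes "compact S" "continuous_on S f" "\<And>x. x \<in> S \<Longrightarrow> f x \<noteq> 0"
  obtains m where "m > 0" "\<And>x. x \<in> S \<Longrightarrow> m \<le> norm (f x)"
proof (cases "S = {}")
  case False
  have "continuous_on S (\<lambda>x. norm (f x))"
    using assms(2) by (rule continuous_on_norm)
  then obtain x0 where "x0 \<in> S" "\<And>x. x \<in> S \<Longrightarrow> norm (f x0) \<le> norm (f x)"
    using continuous_attains_inf[OF assms(1) False] by blast
  then show ?thesis using that[of "norm (f x0)"] assms(3) by auto
qed (use that[of 1] in auto)

lemma inj_on_if_derivative_close:
  fixes F F' :: "complex \<Rightarrow> complex"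
  assumes "convex S" and F: "\<And>w. w \<in> S \<Longrightarrow> (F has_field_derivative F' w) (at w)"
    and close: "\<And>w. w \<in> S \<Longrightarrow> norm (F' w - D) \<le> norm D / 2" and "D \<noteq> 0"
  shows "inj_on F S"
proof (rule inj_onI)
  fix x y assume x: "x \<in> S" and y: "y \<in> S" and "F x = F y"
  have "norm ((F x - D * x) - (F y - D * y)) \<le> norm D / 2 * norm (x - y)"
  proof (rule field_differentiable_bound[OF \<open>convex S\<close> _ close x y])
    fix w assume "w \<in> S"
    then have "(F has_field_derivative F' w) (at w within S)"
      using F has_field_derivative_at_within by blast
    then show "((\<lambda>w. F w - D * w) has_field_derivative F' w - D) (at w within S)"
      by (auto intro!: derivative_eq_intros)
  qed
  also have "(F x - D * x) - (F y - D * y) = D * (y - x)"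
    using \<open>F x = F y\<close> by (simp add: algebra_simps)
  finally have "norm D * norm (x - y) \<le> norm D / 2 * norm (x - y)"
    by (simp add: norm_mult norm_minus_commute)
  then show "x = y" using \<open>D \<noteq> 0\<close> by simp
qed

lemma inj_on_small_perturbation:
  fixes A Q :: "complex \<Rightarrow> complex"
  assumes A: "A holomorphic_on UNIV" and Q: "Q holomorphic_on UNIV" and D: "deriv A z \<noteq> 0"
  obtains \<rho> \<epsilon> where "\<rho> > 0" "\<epsilon> > 0"
    "\<And>K. norm K \<le> \<epsilon> \<Longrightarrow> inj_on (\<lambda>w. A w + K * Q w) (ball z \<rho>)"
proof -
  let ?D = "deriv A z"
  have dA: "(A has_field_derivative deriv A w) (at w)" and dQ: "(Q has_field_derivative deriv Q w) (at w)" for w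
    using A Q by (auto intro: holomorphic_derivI)
  have cA': "continuous_on UNIV (deriv A)" and cQ': "continuous_on UNIV (deriv Q)"
    using A Q by (auto intro: holomorphic_on_imp_continuous_on holomorphic_deriv)
  obtain \<rho> where \<rho>: "\<rho> > 0" "\<And>w. dist w z < \<rho> \<Longrightarrow> dist (deriv A w) ?D < norm ?D / 4"
    using continuous_on_iff[THEN iffD1, OF cA', rule_format, of z "norm ?D / 4"] D by auto
  obtain M where M: "M > 0" "\<And>w. w \<in> cball z \<rho> \<Longrightarrow> norm (deriv Q w) \<le> M"
    using compact_imp_bounded[OF compact_continuous_image[OF continuous_on_subset[OF cQ'] compact_cball[of z \<rho>]]]
    unfolding bounded_pos by auto
  show ?thesis
  proof (rule that[OF \<rho>(1)])
    show "norm ?D / (4 * M) > 0" using M D by simp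
    fix K :: complex assume K: "norm K \<le> norm ?D / (4 * M)"
    show "inj_on (\<lambda>w. A w + K * Q w) (ball z \<rho>)"
    proof (rule inj_on_if_derivative_close[OF convex_ball _ _ D])
      fix w assume w: "w \<in> ball z \<rho>"
      show "((\<lambda>w. A w + K * Q w) has_field_derivative deriv A w + K * deriv Q w) (at w)"
        using dA dQ by (auto intro!: derivative_eq_intros)
      have "norm (K * deriv Q w) \<le> norm ?D / (4 * M) * M"
        unfolding norm_mult using K M w by (intro mult_mono) auto
      also have "\<dots> = norm ?D / 4" using M by simp
      finally have "norm (K * deriv Q w) \<le> norm ?D / 4" .
      moreover have "norm (deriv A w - ?D) < norm ?D / 4"
        using \<rho>(2)[of w] w by (simp add: dist_norm norm_minus_commute)
      ultimately show "norm (deriv A w + K * deriv Q w - ?D) \<le> norm ?D / 2"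
        using norm_triangle_ineq[of "deriv A w - ?D" "K * deriv Q w"] by (simp add: algebra_simps)
    qed
  qed
qed

lemma has_contour_integral_simple_zero:
  fixes \<Phi> :: "complex \<Rightarrow> complex"
  assumes holo: "\<Phi> holomorphic_on ball z \<rho>" and inj: "inj_on \<Phi> (ball z \<rho>)"
    and zero: "\<Phi> X = 0" and X: "X \<in> ball z r" and r: "0 < r" "r < \<rho>"
  shows "((\<lambda>w. w * deriv \<Phi> w / \<Phi> w) has_contour_integral 2 * of_real pi * \<i> * X) (circlepath z r)"
proof -
  have X\<rho>: "X \<in> ball z \<rho>" using X r by auto
  have regular: "deriv \<Phi> X \<noteq> 0"
    by (rule holomorphic_injective_imp_regular[OF holo open_ball inj X\<rho>])
  \<comment> \<open>The difference quotient at the zero is holomorphic and nowhere zero, so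
      \<open>w * deriv \<Phi> w / \<Phi> w = G w / (w - X)\<close> with \<open>G\<close> holomorphic and \<open>G X = X\<close>.\<close>
  define R where "R = (\<lambda>w. if w = X then deriv \<Phi> X else (\<Phi> w - \<Phi> X) / (w - X))"
  have R_holo: "R holomorphic_on ball z \<rho>"
    unfolding R_def by (rule pole_lemma[OF holo]) (use X\<rho> in auto)
  have R_nonzero: "R w \<noteq> 0" if "w \<in> ball z \<rho>" for w
    using regular inj that X\<rho> by (auto simp: R_def inj_on_def)
  define G where "G = (\<lambda>w. w * deriv \<Phi> w / R w)"
  have G_holo: "G holomorphic_on ball z \<rho>"
    unfolding G_def using R_nonzero
    by (intro holomorphic_intros holomorphic_deriv[OF holo open_ball] R_holo) auto
  have "((\<lambda>w. G w / (w - X)) has_contour_integral 2 * of_real pi * \<i> * G X) (circlepath z r)"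
    using r X
    by (intro Cauchy_integral_circlepath holomorphic_on_subset[OF G_holo]
        continuous_on_subset[OF holomorphic_on_imp_continuous_on[OF G_holo]])
       (auto simp: dist_norm norm_minus_commute)
  moreover have "G X = X" using regular by (simp add: G_def R_def)
  ultimately have "((\<lambda>w. G w / (w - X)) has_contour_integral 2 * of_real pi * \<i> * X) (circlepath z r)"
    by simp
  then show ?thesis
  proof (rule has_contour_integral_eq)
    fix w assume "w \<in> path_image (circlepath z r)"
    then have "w \<noteq> X" using r X by auto
    then show "G w / (w - X) = w * deriv \<Phi> w / \<Phi> w"
      by (simp add: G_def R_def zero)
  qed
qed

lemma contour_integral_implicit_root:
  fixes A Q :: "complex \<Rightarrow> complex"
  assumes A: "A holomorphic_on UNIV" and Q: "Q holomorphic_on UNIV"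
    and inj: "inj_on (\<lambda>w. A w + K * Q w) (ball z \<rho>)"
    and X: "X \<in> ball z r" and r: "0 < r" "r < \<rho>" and root: "A X + K * Q X = H"
  shows "contour_integral (circlepath z r) (\<lambda>w. w * deriv A w / (A w + K * Q w - H))
       + K * contour_integral (circlepath z r) (\<lambda>w. w * deriv Q w / (A w + K * Q w - H))
       = 2 * of_real pi * \<i> * X"
proof -
  define \<Phi> where "\<Phi> = (\<lambda>w. A w + K * Q w - H)"
  have \<Phi>_holo: "\<Phi> holomorphic_on UNIV"
    unfolding \<Phi>_def by (intro holomorphic_intros A Q)
  have \<Phi>_inj: "inj_on \<Phi> (ball z \<rho>)"
    using inj by (simp add: \<Phi>_def inj_on_def)
  have deriv_\<Phi>: "deriv \<Phi> w = deriv A w + K * deriv Q w" for w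
    unfolding \<Phi>_def using A Q
    by (intro DERIV_imp_deriv) (auto intro!: derivative_eq_intros holomorphic_derivI)
  have \<Phi>_nonzero: "\<Phi> w \<noteq> 0" if "w \<in> sphere z r" for w
  proof -
    have "w \<noteq> X" "w \<in> ball z \<rho>" "X \<in> ball z \<rho>" using that X r by auto
    then show ?thesis using \<Phi>_inj root by (auto simp: \<Phi>_def inj_on_def)
  qed
  have integrable: "(\<lambda>w. w * deriv F w / \<Phi> w) contour_integrable_on (circlepath z r)"
    if "F holomorphic_on UNIV" for F
    using r \<Phi>_nonzero that
    by (intro contour_integrable_continuous_circlepath continuous_intros
        holomorphic_on_imp_continuous_on[OF holomorphic_on_subset[OF _ subset_UNIV]]
        holomorphic_deriv \<Phi>_holo) auto
  have "((\<lambda>w. w * deriv \<Phi> w / \<Phi> w) has_contour_integral 2 * of_real pi * \<i> * X) (circlepath z r)"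
    using X r \<Phi>_inj root
    by (intro has_contour_integral_simple_zero holomorphic_on_subset[OF \<Phi>_holo]) (auto simp: \<Phi>_def)
  moreover have "(\<lambda>w. w * deriv \<Phi> w / \<Phi> w) = (\<lambda>w. w * deriv A w / \<Phi> w + K * (w * deriv Q w / \<Phi> w))"
    by (simp add: deriv_\<Phi> add_divide_distrib algebra_simps)
  ultimately have "((\<lambda>w. w * deriv A w / \<Phi> w + K * (w * deriv Q w / \<Phi> w))
      has_contour_integral 2 * of_real pi * \<i> * X) (circlepath z r)"
    by (simp only:)
  moreover have "((\<lambda>w. w * deriv A w / \<Phi> w + K * (w * deriv Q w / \<Phi> w)) has_contour_integral
      contour_integral (circlepath z r) (\<lambda>w. w * deriv A w / \<Phi> w)
      + K * contour_integral (circlepath z r) (\<lambda>w. w * deriv Q w / \<Phi> w)) (circlepath z r)"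
    by (intro has_contour_integral_add has_contour_integral_lmul has_contour_integral_integral
        integrable A Q)
  ultimately show ?thesis
    unfolding \<Phi>_def by (rule has_contour_integral_unique[symmetric])
qed

lemma implicit_function_circle:
  fixes A Q :: "complex \<Rightarrow> complex"
  assumes A: "A holomorphic_on UNIV" and Q: "Q holomorphic_on UNIV"
    and zero: "A z0 = 0" and regular: "deriv A z0 \<noteq> 0"
  obtains \<rho> \<epsilon> r m M where "0 < r" "r < \<rho>" "\<epsilon> > 0" "M > 0"
    "\<And>K. norm K \<le> \<epsilon> \<Longrightarrow> inj_on (\<lambda>w. A w + K * Q w) (ball z0 \<rho>)"
    "circle_expansion (\<lambda>w. w * deriv A w) A Q z0 r m M"
    "circle_expansion (\<lambda>w. w * deriv Q w) A Q z0 r m M"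
proof -
  obtain \<rho> \<epsilon> where \<rho>: "\<rho> > 0" and \<epsilon>: "\<epsilon> > 0"
    and inj: "\<And>K. norm K \<le> \<epsilon> \<Longrightarrow> inj_on (\<lambda>w. A w + K * Q w) (ball z0 \<rho>)"
    using inj_on_small_perturbation[OF A Q regular] by blast
  define r where "r = \<rho> / 2"
  have r: "0 < r" "r < \<rho>" using \<rho> by (auto simp: r_def)
  have cont: "continuous_on (sphere z0 r) F" if "F holomorphic_on UNIV" for F
    using holomorphic_on_imp_continuous_on[OF that] continuous_on_subset by blast
  have cont_deriv: "continuous_on (sphere z0 r) (\<lambda>w. w * deriv F w)" if "F holomorphic_on UNIV" for F
    using that by (intro continuous_intros cont holomorphic_deriv) auto
  have "A w \<noteq> 0" if "w \<in> sphere z0 r" for w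
  proof -
    have "w \<in> ball z0 \<rho>" "z0 \<in> ball z0 \<rho>" "w \<noteq> z0" using that r by auto
    then show ?thesis using inj[of 0] \<epsilon> zero by (auto simp: inj_on_def)
  qed
  then obtain m where m: "m > 0" "\<And>w. w \<in> sphere z0 r \<Longrightarrow> m \<le> norm (A w)"
    using compact_norm_lower_bound[OF compact_sphere cont[OF A]] by blast
  obtain M where M: "M > 0" "\<And>w. w \<in> sphere z0 r \<Longrightarrow> norm (Q w) \<le> M"
    using compact_imp_bounded[OF compact_continuous_image[OF cont[OF Q] compact_sphere]]
    unfolding bounded_pos by auto
  show ?thesis
  proof (rule that[OF r \<epsilon> M(1) inj])
    show "circle_expansion (\<lambda>w. w * deriv A w) A Q z0 r m M"
      using r m M by unfold_locales (auto intro: cont cont_deriv A Q)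
    show "circle_expansion (\<lambda>w. w * deriv Q w) A Q z0 r m M"
      using r m M by unfold_locales (auto intro: cont cont_deriv A Q)
  qed
qed

theorem implicit_function_double_series:
  fixes A Q :: "complex \<Rightarrow> complex" and x0 :: real
  assumes A: "A holomorphic_on UNIV" and Q: "Q holomorphic_on UNIV"
    and zero: "A (of_real x0) = 0" and regular: "deriv A (of_real x0) \<noteq> 0"
  obtains r and coef :: "nat \<Rightarrow> nat \<Rightarrow> real" where "r > 0"
    "\<And>h k x. \<bar>h\<bar> < r \<Longrightarrow> \<bar>k\<bar> < r \<Longrightarrow> \<bar>x - x0\<bar> < r \<Longrightarrow>
       A (of_real x) + of_real k * Q (of_real x) = of_real h \<Longrightarrow>
       ((\<lambda>(m, n). coef m n * h ^ m * k ^ n) has_sum x) UNIV"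
proof -
  define z0 :: complex where "z0 = of_real x0"
  have "A z0 = 0" "deriv A z0 \<noteq> 0" using zero regular by (simp_all add: z0_def)
  then obtain r \<rho> \<epsilon> M m where r: "0 < r" "r < \<rho>" and "\<epsilon> > 0" "M > 0"
    and inj: "\<And>K. norm K \<le> \<epsilon> \<Longrightarrow> inj_on (\<lambda>w. A w + K * Q w) (ball z0 \<rho>)"
    and EA: "circle_expansion (\<lambda>w. w * deriv A w) A Q z0 r m M"
    and EQ: "circle_expansion (\<lambda>w. w * deriv Q w) A Q z0 r m M"
    by (rule implicit_function_circle[OF A Q]) blast
  interpret EA: circle_expansion "\<lambda>w. w * deriv A w" A Q z0 r m M by (fact EA)
  interpret EQ: circle_expansion "\<lambda>w. w * deriv Q w" A Q z0 r m M by (fact EQ)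
  \<comment> \<open>the factor \<open>k\<close> in front of the second integral shifts its series in \<open>k\<close>\<close>
  define c where "c i j = (EA.expansion_coeff i j + (if j = 0 then 0 else EQ.expansion_coeff i (j - 1)))
    / (2 * of_real pi * \<i>)" for i j
  define R where "R = min r (min \<epsilon> (m / (2 * (1 + M))))"
  show ?thesis
  proof (rule that[of R "\<lambda>i j. Re (c i j)"])
    show "R > 0" using r \<open>\<epsilon> > 0\<close> \<open>M > 0\<close> EA.m_pos by (simp add: R_def)
    fix h k x :: real
    assume h: "\<bar>h\<bar> < R" and k: "\<bar>k\<bar> < R" and x: "\<bar>x - x0\<bar> < R"
      and root: "A (of_real x) + of_real k * Q (of_real x) = of_real h"
    have X: "of_real x \<in> ball z0 r"
      using x by (simp add: z0_def dist_norm R_def abs_minus_commute flip: of_real_diff)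
    have small: "norm (of_real h :: complex) + M * norm (of_real k :: complex) < m"
    proof -
      have "R \<le> m / (2 * (1 + M))" by (simp add: R_def)
      then have "R + M * R \<le> m / 2" using \<open>M > 0\<close> by (simp add: field_simps)
      moreover have "\<bar>h\<bar> + M * \<bar>k\<bar> < R + M * R"
        using h k \<open>M > 0\<close> by (intro add_less_le_mono mult_left_mono) auto
      ultimately show ?thesis using EA.m_pos by simp
    qed
    have "contour_integral (circlepath z0 r) (\<lambda>w. w * deriv A w / (A w + of_real k * Q w - of_real h))
        + of_real k * contour_integral (circlepath z0 r) (\<lambda>w. w * deriv Q w / (A w + of_real k * Q w - of_real h))
        = 2 * of_real pi * \<i> * of_real x"
      using k r X root by (intro contour_integral_implicit_root[OF A Q inj]) (auto simp: R_def)
    then have series: "((\<lambda>p. (case p of (i, j) \<Rightarrow> EA.expansion_coeff i j * of_real h ^ i * of_real k ^ j)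
        + (case p of (i, j) \<Rightarrow> (if j = 0 then 0 else EQ.expansion_coeff i (j - 1)) * of_real h ^ i * of_real k ^ j))
        has_sum 2 * of_real pi * \<i> * of_real x) UNIV"
      using has_sum_add[OF EA.has_sum_expansion[OF small]
          has_sum_double_series_shift_snd[OF EQ.has_sum_expansion[OF small]]]
      by simp
    have "((\<lambda>p. ((case p of (i, j) \<Rightarrow> EA.expansion_coeff i j * of_real h ^ i * of_real k ^ j)
        + (case p of (i, j) \<Rightarrow> (if j = 0 then 0 else EQ.expansion_coeff i (j - 1)) * of_real h ^ i * of_real k ^ j))
          / (2 * of_real pi * \<i>)) has_sum of_real x) UNIV"
      using has_sum_divide_const[OF series, of "2 * of_real pi * \<i>"] by simp
    then have "((\<lambda>(i, j). c i j * of_real h ^ i * of_real k ^ j) has_sum of_real x) UNIV"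
      by (rule has_sum_cong[THEN iffD1, rotated]) (auto simp: c_def add_divide_distrib algebra_simps)
    then show "((\<lambda>(m, n). Re (c m n) * h ^ m * k ^ n) has_sum x) UNIV"
      by (rule has_sum_Re_double_series)
  qed
qed

lemma real_analytic2_on_cong:
  assumes "real_analytic2_on f S" "open S" "\<And>x y. (x, y) \<in> S \<Longrightarrow> f x y = g x y"
  shows "real_analytic2_on g S"
  unfolding real_analytic2_on_def
proof (intro ballI, clarify)
  fix x y assume xy: "(x, y) \<in> S"
  obtain r coef where "r > 0" and series: "\<And>h k. \<bar>h\<bar> < r \<and> \<bar>k\<bar> < r \<Longrightarrow>
      ((\<lambda>(m, n). coef m n * h ^ m * k ^ n) has_sum f (x + h) (y + k)) UNIV"
    using assms(1) xy unfolding real_analytic2_on_def by fast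
  obtain e where "e > 0" and e: "ball (x, y) e \<subseteq> S"
    using assms(2) xy open_contains_ball by blast
  show "\<exists>r>0. \<exists>coef. \<forall>h k. \<bar>h\<bar> < r \<and> \<bar>k\<bar> < r \<longrightarrow>
      ((\<lambda>(m, n). coef m n * h ^ m * k ^ n) has_sum g (x + h) (y + k)) UNIV"
  proof (intro exI[of _ "min r (e / 2)"] exI[of _ coef] conjI allI impI)
    show "min r (e / 2) > 0" using \<open>r > 0\<close> \<open>e > 0\<close> by simp
    fix h k assume hk: "\<bar>h\<bar> < min r (e / 2) \<and> \<bar>k\<bar> < min r (e / 2)"
    have "dist (x, y) (x + h, y + k) \<le> \<bar>h\<bar> + \<bar>k\<bar>"
      by (simp add: dist_Pair_Pair dist_real_def sqrt_sum_squares_le_sum_abs)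
    then have "(x + h, y + k) \<in> S" using hk e by auto
    then show "((\<lambda>(m, n). coef m n * h ^ m * k ^ n) has_sum g (x + h) (y + k)) UNIV"
      using series[of h k] hk assms(3) by simp
  qed
qed

section \<open>The equation for the free boundary\<close>

definition phi :: "real \<Rightarrow> real \<Rightarrow> real" where
  "phi \<kappa> x = (1 - exp (- (\<kappa> * x))) / \<kappa>"

text \<open>\<open>y0_of \<alpha> \<kappa> z0 x\<^sub>h\<close> is the value of \<open>y0\<close> for which \<open>x\<^sub>h\<close> is the free boundary.\<close>

definition y0_of :: "real \<Rightarrow> real \<Rightarrow> real \<Rightarrow> real \<Rightarrow> real" where
  "y0_of \<alpha> \<kappa> z x = \<alpha> * (x - phi \<kappa> x) + z * phi \<kappa> x"

definition boundary :: "real \<Rightarrow> real \<Rightarrow> real \<Rightarrow> real \<Rightarrow> real" where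
  "boundary \<alpha> \<kappa> y z = (THE x. 0 < x \<and> y0_of \<alpha> \<kappa> z x = y)"

lemma phi_0 [simp]: "phi \<kappa> 0 = 0" and y0_of_0 [simp]: "y0_of \<alpha> \<kappa> z 0 = 0"
  by (simp_all add: phi_def y0_of_def)

lemma y0_of_add_slope: "y0_of \<alpha> \<kappa> (z + k) x = y0_of \<alpha> \<kappa> z x + k * phi \<kappa> x"
  by (simp add: y0_of_def algebra_simps)

locale boundary_params =
  fixes \<alpha> \<kappa> :: real
  assumes alpha_pos: "\<alpha> > 0" and kappa_pos: "\<kappa> > 0"
begin

lemma has_real_derivative_phi: "(phi \<kappa> has_real_derivative exp (- (\<kappa> * x))) (at x)"
  unfolding phi_def [abs_def] using kappa_pos by (auto intro!: derivative_eq_intros)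

lemma has_real_derivative_y0_of:
  "(y0_of \<alpha> \<kappa> z has_real_derivative \<alpha> * (1 - exp (- (\<kappa> * x))) + z * exp (- (\<kappa> * x))) (at x)"
  unfolding y0_of_def [abs_def]
  by (auto intro!: derivative_eq_intros has_real_derivative_phi simp: algebra_simps)

lemma continuous_on_y0_of: "continuous_on S (y0_of \<alpha> \<kappa> z)"
  using has_real_derivative_y0_of by (meson DERIV_continuous continuous_at_imp_continuous_on)

lemma phi_mono: "x1 \<le> x2 \<Longrightarrow> phi \<kappa> x1 \<le> phi \<kappa> x2"
  unfolding phi_def using kappa_pos by (intro divide_right_mono) auto

lemma phi_pos: "x > 0 \<Longrightarrow> phi \<kappa> x > 0"
  unfolding phi_def using kappa_pos by (auto intro!: divide_pos_pos)

lemma phi_nonneg: "x \<ge> 0 \<Longrightarrow> phi \<kappa> x \<ge> 0"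
  using phi_mono[of 0 x] by simp

lemma phi_le: "phi \<kappa> x \<le> x"
proof -
  have "1 - exp (- (\<kappa> * x)) \<le> \<kappa> * x"
    using exp_ge_add_one_self[of "- (\<kappa> * x)"] by simp
  then show ?thesis using kappa_pos unfolding phi_def by (simp add: divide_le_eq mult.commute)
qed

lemma phi_le_inverse: "phi \<kappa> x \<le> 1 / \<kappa>"
  unfolding phi_def using kappa_pos by (intro divide_right_mono) auto

lemma y0_of_derivative_pos:
  assumes "z \<ge> 0" "x > 0"
  shows "\<alpha> * (1 - exp (- (\<kappa> * x))) + z * exp (- (\<kappa> * x)) > 0"
proof -
  have "exp (- (\<kappa> * x)) < 1" using assms kappa_pos by simp
  then show ?thesis using alpha_pos assms by (intro add_pos_nonneg) auto
qed

lemma y0_of_less: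
  assumes "z \<ge> 0" "0 \<le> x1" "x1 < x2"
  shows "y0_of \<alpha> \<kappa> z x1 < y0_of \<alpha> \<kappa> z x2"
proof (rule DERIV_pos_imp_increasing_open[OF \<open>x1 < x2\<close> _ continuous_on_y0_of])
  fix x assume "x1 < x" "x < x2"
  then show "\<exists>d. (y0_of \<alpha> \<kappa> z has_real_derivative d) (at x) \<and> 0 < d"
    using has_real_derivative_y0_of y0_of_derivative_pos[of z x] assms by auto
qed

lemma y0_of_less_iff:
  assumes "z \<ge> 0" "0 \<le> x1" "0 \<le> x2"
  shows "y0_of \<alpha> \<kappa> z x1 < y0_of \<alpha> \<kappa> z x2 \<longleftrightarrow> x1 < x2"
  using y0_of_less[of z x1 x2] y0_of_less[of z x2 x1] assms
  by (cases x1 x2 rule: linorder_cases) auto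

lemma y0_of_eq_iff:
  assumes "z \<ge> 0" "0 \<le> x1" "0 \<le> x2"
  shows "y0_of \<alpha> \<kappa> z x1 = y0_of \<alpha> \<kappa> z x2 \<longleftrightarrow> x1 = x2"
  using y0_of_less_iff[OF assms] y0_of_less_iff[of z x2 x1] assms by (auto simp: neq_iff)

lemma y0_of_pos: "z \<ge> 0 \<Longrightarrow> x > 0 \<Longrightarrow> y0_of \<alpha> \<kappa> z x > 0"
  using y0_of_less[of z 0 x] by simp

lemma y0_of_lower: "z \<ge> 0 \<Longrightarrow> x \<ge> 0 \<Longrightarrow> \<alpha> * (x - 1 / \<kappa>) \<le> y0_of \<alpha> \<kappa> z x"
  unfolding y0_of_def using phi_le_inverse[of x] phi_nonneg[of x] alpha_pos
  by (smt (verit, best) mult_left_mono mult_nonneg_nonneg)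

lemma y0_of_upper: "z \<ge> 0 \<Longrightarrow> x \<ge> 0 \<Longrightarrow> y0_of \<alpha> \<kappa> z x \<le> (\<alpha> + z) * x"
  unfolding y0_of_def using phi_le[of x] phi_nonneg[of x] alpha_pos
  by (smt (verit, best) mult_left_mono distrib_right mult_nonneg_nonneg)

lemma y0_of_slope_perturbation:
  assumes "x \<ge> 0"
  shows "\<bar>y0_of \<alpha> \<kappa> (z + k) x - y0_of \<alpha> \<kappa> z x\<bar> \<le> \<bar>k\<bar> / \<kappa>"
proof -
  have "\<bar>k\<bar> * phi \<kappa> x \<le> \<bar>k\<bar> * (1 / \<kappa>)"
    using phi_le_inverse[of x] by (intro mult_left_mono) auto
  then show ?thesis using phi_nonneg[OF assms] by (simp add: y0_of_add_slope abs_mult)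
qed

lemma y0_of_surj:
  assumes "z \<ge> 0" "y > 0"
  obtains x where "x > 0" "y0_of \<alpha> \<kappa> z x = y"
proof -
  define x1 where "x1 = y / \<alpha> + 1 / \<kappa>"
  have "x1 \<ge> 0" using alpha_pos kappa_pos assms by (simp add: x1_def)
  moreover have "y \<le> y0_of \<alpha> \<kappa> z x1"
    using y0_of_lower[OF \<open>z \<ge> 0\<close> \<open>x1 \<ge> 0\<close>] alpha_pos by (simp add: x1_def algebra_simps)
  ultimately obtain x where "0 \<le> x" "y0_of \<alpha> \<kappa> z x = y"
    using IVT'[of "y0_of \<alpha> \<kappa> z" 0 y x1] continuous_on_y0_of assms by auto
  with that[of x] \<open>y > 0\<close> show ?thesis by (cases "x = 0") auto
qed

lemma boundary_root:
  assumes "z \<ge> 0" "y > 0"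
  shows boundary_pos: "boundary \<alpha> \<kappa> y z > 0"
    and y0_of_boundary: "y0_of \<alpha> \<kappa> z (boundary \<alpha> \<kappa> y z) = y"
proof -
  obtain x where x: "x > 0" "y0_of \<alpha> \<kappa> z x = y"
    using y0_of_surj[OF assms] by blast
  have "boundary \<alpha> \<kappa> y z = x"
    unfolding boundary_def
    by (rule the_equality) (use x y0_of_eq_iff[OF \<open>z \<ge> 0\<close>] in force)+
  with x show "boundary \<alpha> \<kappa> y z > 0" "y0_of \<alpha> \<kappa> z (boundary \<alpha> \<kappa> y z) = y" by auto
qed

lemma less_boundary_iff:
  assumes "z \<ge> 0" "y > 0" "x \<ge> 0"
  shows "x < boundary \<alpha> \<kappa> y z \<longleftrightarrow> y0_of \<alpha> \<kappa> z x < y"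
  using y0_of_less_iff[of z x "boundary \<alpha> \<kappa> y z"] boundary_root[of z y] assms by auto

lemma boundary_less_iff:
  assumes "z \<ge> 0" "y > 0" "x \<ge> 0"
  shows "boundary \<alpha> \<kappa> y z < x \<longleftrightarrow> y < y0_of \<alpha> \<kappa> z x"
  using y0_of_less_iff[of z "boundary \<alpha> \<kappa> y z" x] boundary_root[of z y] assms by auto

lemma boundary_strict_mono:
  assumes "z \<ge> 0" "0 < y1" "y1 < y2"
  shows "boundary \<alpha> \<kappa> y1 z < boundary \<alpha> \<kappa> y2 z"
  using assms boundary_root[of z y1] by (subst less_boundary_iff) auto

lemma boundary_strict_antimono:
  assumes "y > 0" "0 \<le> z1" "z1 < z2"
  shows "boundary \<alpha> \<kappa> y z2 < boundary \<alpha> \<kappa> y z1"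
proof -
  let ?x = "boundary \<alpha> \<kappa> y z1"
  have "y0_of \<alpha> \<kappa> z2 ?x = y + (z2 - z1) * phi \<kappa> ?x"
    using y0_of_add_slope[of \<alpha> \<kappa> z1 "z2 - z1" ?x] boundary_root[of z1 y] assms by simp
  moreover have "(z2 - z1) * phi \<kappa> ?x > 0"
    using phi_pos boundary_pos[of z1 y] assms by simp
  ultimately show ?thesis
    using assms boundary_pos[of z1 y] by (subst boundary_less_iff) auto
qed

lemma filterlim_boundary_at_top:
  assumes "z \<ge> 0"
  shows "filterlim (\<lambda>y. boundary \<alpha> \<kappa> y z) at_top at_top"
proof (rule filterlim_at_top_mono)
  show "filterlim (\<lambda>y. 1 / (\<alpha> + z) * y) at_top at_top"
    using alpha_pos assms by (intro filterlim_tendsto_pos_mult_at_top[OF tendsto_const] filterlim_ident) auto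
  show "\<forall>\<^sub>F y in at_top. 1 / (\<alpha> + z) * y \<le> boundary \<alpha> \<kappa> y z"
    using eventually_gt_at_top[of 0]
  proof eventually_elim
    case (elim y)
    then have "y \<le> (\<alpha> + z) * boundary \<alpha> \<kappa> y z"
      using y0_of_upper[OF assms, of "boundary \<alpha> \<kappa> y z"] boundary_root[OF assms elim] by simp
    then show ?case using alpha_pos assms by (simp add: field_simps)
  qed
qed

lemma boundary_tendsto_0_at_right:
  assumes "z \<ge> 0"
  shows "((\<lambda>y. boundary \<alpha> \<kappa> y z) \<longlongrightarrow> 0) (at_right 0)"
proof (rule tendstoI)
  fix e :: real assume "e > 0"
  show "\<forall>\<^sub>F y in at_right 0. dist (boundary \<alpha> \<kappa> y z) 0 < e"
    using eventually_at_right_real[OF y0_of_pos[OF assms \<open>e > 0\<close>]]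
  proof eventually_elim
    case (elim y)
    then show ?case
      using boundary_less_iff[OF assms, of y e] boundary_pos[OF assms, of y] \<open>e > 0\<close> by simp
  qed
qed

lemma boundary_tendsto_0_at_top:
  assumes "y > 0"
  shows "((\<lambda>z. boundary \<alpha> \<kappa> y z) \<longlongrightarrow> 0) at_top"
proof (rule tendstoI)
  fix e :: real assume "e > 0"
  then have \<phi>: "phi \<kappa> e > 0" by (rule phi_pos)
  show "\<forall>\<^sub>F z in at_top. dist (boundary \<alpha> \<kappa> y z) 0 < e"
    using eventually_gt_at_top[of "y / phi \<kappa> e"]
  proof eventually_elim
    case (elim z)
    then have z: "z \<ge> 0" using \<phi> assms by (smt (verit) divide_pos_pos)
    have "y < z * phi \<kappa> e" using elim \<phi> by (simp add: pos_divide_less_eq)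
    also have "\<dots> \<le> y0_of \<alpha> \<kappa> z e"
      using phi_le[of e] alpha_pos unfolding y0_of_def by simp
    finally show ?case
      using boundary_less_iff[OF z assms, of e] boundary_pos[OF z assms] \<open>e > 0\<close> by simp
  qed
qed

lemma boundary_near:
  assumes "y0 > 0" "z0 \<ge> 0" "\<epsilon> > 0"
  obtains \<delta> where "\<delta> > 0"
    "\<And>h k. \<bar>h\<bar> < \<delta> \<Longrightarrow> \<bar>k\<bar> < \<delta> \<Longrightarrow> z0 + k \<ge> 0 \<Longrightarrow>
       y0 + h > 0 \<and> \<bar>boundary \<alpha> \<kappa> (y0 + h) (z0 + k) - boundary \<alpha> \<kappa> y0 z0\<bar> < \<epsilon>"
proof -
  define x0 where "x0 = boundary \<alpha> \<kappa> y0 z0"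
  have x0: "x0 > 0" using boundary_pos[OF assms(2,1)] by (simp add: x0_def)
  define e where "e = min \<epsilon> (x0 / 2)"
  have e: "0 < e" "e \<le> \<epsilon>" "e < x0" using assms x0 by (auto simp: e_def)
  define L U where "L = y0_of \<alpha> \<kappa> z0 (x0 - e)" and "U = y0_of \<alpha> \<kappa> z0 (x0 + e)"
  have "0 < L" using y0_of_pos[OF assms(2)] e by (simp add: L_def)
  have "L < y0" using less_boundary_iff[OF assms(2,1), of "x0 - e", folded x0_def] e by (simp add: L_def)
  have "y0 < U" using boundary_less_iff[OF assms(2,1), of "x0 + e", folded x0_def] e x0 by (simp add: U_def)
  define m where "m = min (y0 - L) (U - y0)"
  define \<delta> where "\<delta> = m * \<kappa> / (2 * (\<kappa> + 1))"
  have "\<delta> + \<delta> / \<kappa> = m * (\<kappa> + 1) / (2 * (\<kappa> + 1))"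
    using kappa_pos by (simp add: \<delta>_def add_divide_distrib distrib_left)
  also have "\<dots> = m / 2"
    using kappa_pos by (intro nonzero_mult_divide_mult_cancel_right) simp
  finally have "\<delta> + \<delta> / \<kappa> = m / 2" .
  moreover have "0 < m" "m \<le> y0 - L" "m \<le> U - y0"
    using \<open>L < y0\<close> \<open>y0 < U\<close> by (auto simp: m_def)
  ultimately have \<delta>: "\<delta> + \<delta> / \<kappa> < y0 - L" "\<delta> + \<delta> / \<kappa> < U - y0"
    by linarith+
  have "\<delta> > 0" using \<open>L < y0\<close> \<open>y0 < U\<close> kappa_pos by (simp add: \<delta>_def m_def)
  show ?thesis
  proof (rule that[OF \<open>\<delta> > 0\<close>])
    fix h k assume h: "\<bar>h\<bar> < \<delta>" and k: "\<bar>k\<bar> < \<delta>" and z: "z0 + k \<ge> 0"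
    have k': "\<bar>k\<bar> / \<kappa> < \<delta> / \<kappa>" using k kappa_pos by (simp add: divide_strict_right_mono)
    have "0 \<le> \<delta> / \<kappa>" using \<open>\<delta> > 0\<close> kappa_pos by simp
    then have y: "y0 + h > 0" using h \<delta> \<open>0 < L\<close> by (simp add: abs_less_iff)
    have "y0_of \<alpha> \<kappa> (z0 + k) (x0 - e) < y0 + h"
      using y0_of_slope_perturbation[of "x0 - e" z0 k] k' h \<delta>(1) e
      unfolding L_def[symmetric] abs_le_iff abs_less_iff by linarith
    then have lower: "x0 - e < boundary \<alpha> \<kappa> (y0 + h) (z0 + k)"
      using less_boundary_iff[OF z y, of "x0 - e"] e by simp
    have "y0 + h < y0_of \<alpha> \<kappa> (z0 + k) (x0 + e)"
      using y0_of_slope_perturbation[of "x0 + e" z0 k] k' h \<delta>(2) e x0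
      unfolding U_def[symmetric] abs_le_iff abs_less_iff by linarith
    then have upper: "boundary \<alpha> \<kappa> (y0 + h) (z0 + k) < x0 + e"
      using boundary_less_iff[OF z y, of "x0 + e"] e x0 by simp
    show "y0 + h > 0 \<and> \<bar>boundary \<alpha> \<kappa> (y0 + h) (z0 + k) - boundary \<alpha> \<kappa> y0 z0\<bar> < \<epsilon>"
      using y lower upper e unfolding x0_def abs_less_iff by linarith
  qed
qed

lemma boundary_tendsto_at_right_slope:
  assumes "y > 0"
  shows "((\<lambda>z. boundary \<alpha> \<kappa> y z) \<longlongrightarrow> boundary \<alpha> \<kappa> y 0) (at_right 0)"
proof (rule tendstoI)
  fix e :: real assume "e > 0"
  obtain \<delta> where "\<delta> > 0" and \<delta>: "\<And>h k. \<bar>h\<bar> < \<delta> \<Longrightarrow> \<bar>k\<bar> < \<delta> \<Longrightarrow> 0 + k \<ge> 0 \<Longrightarrow>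
      y + h > 0 \<and> \<bar>boundary \<alpha> \<kappa> (y + h) (0 + k) - boundary \<alpha> \<kappa> y 0\<bar> < e"
    using boundary_near[OF assms order_refl \<open>e > 0\<close>] by blast
  show "\<forall>\<^sub>F z in at_right 0. dist (boundary \<alpha> \<kappa> y z) (boundary \<alpha> \<kappa> y 0) < e"
    using eventually_at_right_real[OF \<open>\<delta> > 0\<close>]
  proof eventually_elim
    case (elim z)
    then show ?case using \<delta>[of 0 z] \<open>\<delta> > 0\<close> by (simp add: dist_real_def)
  qed
qed

lemma y0_of_entire_extension:
  assumes "z0 \<ge> 0"
  obtains A Q :: "complex \<Rightarrow> complex"
  where "A holomorphic_on UNIV" "Q holomorphic_on UNIV"
    "\<And>x. A (of_real x) = of_real (y0_of \<alpha> \<kappa> z0 x - y0)"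
    "\<And>x. Q (of_real x) = of_real (phi \<kappa> x)"
    "\<And>x. x > 0 \<Longrightarrow> deriv A (of_real x) \<noteq> 0"
proof -
  define Q where "Q w = (1 - exp (- (of_real \<kappa> * w))) / of_real \<kappa>" for w :: complex
  define A where "A w = of_real \<alpha> * (w - Q w) + of_real z0 * Q w - of_real y0" for w :: complex
  have Q_real: "Q (of_real x) = of_real (phi \<kappa> x)" for x
    by (simp add: Q_def phi_def flip: exp_of_real)
  have A_real: "A (of_real x) = of_real (y0_of \<alpha> \<kappa> z0 x - y0)" for x
    by (simp add: A_def Q_real y0_of_def)
  have holo: "A holomorphic_on UNIV" "Q holomorphic_on UNIV"
    using kappa_pos by (auto simp: Q_def [abs_def] A_def [abs_def] intro!: holomorphic_intros)
  have "(A has_field_derivative of_real \<alpha> * (1 - exp (- (of_real \<kappa> * w))) + of_real z0 * exp (- (of_real \<kappa> * w)))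
      (at w)" for w
    using kappa_pos unfolding A_def [abs_def] Q_def
    by (auto intro!: derivative_eq_intros simp: field_simps)
  then have "deriv A (of_real x) = of_real (\<alpha> * (1 - exp (- (\<kappa> * x))) + z0 * exp (- (\<kappa> * x)))" for x
    by (simp add: DERIV_imp_deriv flip: exp_of_real)
  then have "deriv A (of_real x) \<noteq> 0" if "x > 0" for x
    using y0_of_derivative_pos[OF assms that] by (metis of_real_eq_0_iff less_irrefl)
  with holo A_real Q_real show ?thesis by (rule that)
qed

lemma boundary_double_series:
  assumes y0: "y0 > 0" and z0: "z0 \<ge> 0"
  obtains r and coef :: "nat \<Rightarrow> nat \<Rightarrow> real" where "r > 0"
    "\<And>h k. \<bar>h\<bar> < r \<Longrightarrow> \<bar>k\<bar> < r \<Longrightarrow> z0 + k \<ge> 0 \<Longrightarrow>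
       ((\<lambda>(m, n). coef m n * h ^ m * k ^ n) has_sum boundary \<alpha> \<kappa> (y0 + h) (z0 + k)) UNIV"
proof -
  define x0 where "x0 = boundary \<alpha> \<kappa> y0 z0"
  have x0: "x0 > 0" "y0_of \<alpha> \<kappa> z0 x0 = y0" using boundary_root[OF z0 y0] by (auto simp: x0_def)
  obtain A Q where A_holo: "A holomorphic_on UNIV" and Q_holo: "Q holomorphic_on UNIV"
    and A_real: "\<And>x. A (of_real x) = of_real (y0_of \<alpha> \<kappa> z0 x - y0)"
    and Q_real: "\<And>x. Q (of_real x) = of_real (phi \<kappa> x)"
    and regular: "deriv A (of_real x0) \<noteq> 0"
    using y0_of_entire_extension[OF z0, of y0] x0(1) by metis
  obtain r1 coef where "r1 > 0" and series: "\<And>h k x. \<bar>h\<bar> < r1 \<Longrightarrow> \<bar>k\<bar> < r1 \<Longrightarrow> \<bar>x - x0\<bar> < r1 \<Longrightarrow>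
      A (of_real x) + of_real k * Q (of_real x) = of_real h \<Longrightarrow>
      ((\<lambda>(m, n). coef m n * h ^ m * k ^ n) has_sum x) UNIV"
    using implicit_function_double_series[OF A_holo Q_holo _ regular] A_real x0 by auto
  obtain \<delta> where "\<delta> > 0" and near: "\<And>h k. \<bar>h\<bar> < \<delta> \<Longrightarrow> \<bar>k\<bar> < \<delta> \<Longrightarrow> z0 + k \<ge> 0 \<Longrightarrow>
      y0 + h > 0 \<and> \<bar>boundary \<alpha> \<kappa> (y0 + h) (z0 + k) - x0\<bar> < r1"
    using boundary_near[OF y0 z0 \<open>r1 > 0\<close>] unfolding x0_def by blast
  show ?thesis
  proof (rule that[of "min r1 \<delta>" coef])
    show "min r1 \<delta> > 0" using \<open>r1 > 0\<close> \<open>\<delta> > 0\<close> by simp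
    fix h k assume h: "\<bar>h\<bar> < min r1 \<delta>" and k: "\<bar>k\<bar> < min r1 \<delta>" and z: "z0 + k \<ge> 0"
    define x where "x = boundary \<alpha> \<kappa> (y0 + h) (z0 + k)"
    have "y0 + h > 0" "\<bar>x - x0\<bar> < r1" using near[of h k] h k z by (auto simp: x_def)
    then have "y0_of \<alpha> \<kappa> z0 x - y0 + k * phi \<kappa> x = h"
      using boundary_root[OF z] y0_of_add_slope[of \<alpha> \<kappa> z0 k x] by (simp add: x_def)
    then have "A (of_real x) + of_real k * Q (of_real x) = of_real h"
      unfolding A_real Q_real by (metis of_real_add of_real_mult)
    then show "((\<lambda>(m, n). coef m n * h ^ m * k ^ n) has_sum x) UNIV"
      using series[of h k x] h k \<open>\<bar>x - x0\<bar> < r1\<close> by simp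
  qed
qed

lemma strict_mono_on_boundary: "z \<ge> 0 \<Longrightarrow> strict_mono_on {0<..} (\<lambda>y. boundary \<alpha> \<kappa> y z)"
  by (intro strict_mono_onI boundary_strict_mono) auto

lemma real_analytic_on_boundary:
  assumes "z \<ge> 0"
  shows "real_analytic_on (\<lambda>y. boundary \<alpha> \<kappa> y z) {0<..}"
  unfolding real_analytic_on_def
proof
  fix y0 :: real assume "y0 \<in> {0<..}"
  then obtain r coef where "r > 0" and series: "\<And>h k. \<bar>h\<bar> < r \<Longrightarrow> \<bar>k\<bar> < r \<Longrightarrow> z + k \<ge> 0 \<Longrightarrow>
      ((\<lambda>(m, n). coef m n * h ^ m * k ^ n) has_sum boundary \<alpha> \<kappa> (y0 + h) (z + k)) UNIV"
    using boundary_double_series[of y0 z] assms by auto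
  show "\<exists>r>0. \<exists>coef. \<forall>h. \<bar>h\<bar> < r \<longrightarrow> ((\<lambda>n. coef n * h ^ n) has_sum boundary \<alpha> \<kappa> (y0 + h) z) UNIV"
  proof (intro exI[of _ r] conjI exI[of _ "\<lambda>m. coef m 0"] allI impI \<open>r > 0\<close>)
    fix h :: real assume "\<bar>h\<bar> < r"
    then show "((\<lambda>m. coef m 0 * h ^ m) has_sum boundary \<alpha> \<kappa> (y0 + h) z) UNIV"
      using series[of h 0] \<open>r > 0\<close> assms by (auto intro: has_sum_double_series_snd_zero)
  qed
qed

lemma real_analytic2_on_boundary:
  "real_analytic2_on (\<lambda>y z. boundary \<alpha> \<kappa> y z) ({0<..} \<times> {0<..})"
  unfolding real_analytic2_on_def
proof (intro ballI, clarify)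
  fix y0 z0 :: real assume "y0 > 0" "z0 > 0"
  then obtain r coef where "r > 0" and series: "\<And>h k. \<bar>h\<bar> < r \<Longrightarrow> \<bar>k\<bar> < r \<Longrightarrow> z0 + k \<ge> 0 \<Longrightarrow>
      ((\<lambda>(m, n). coef m n * h ^ m * k ^ n) has_sum boundary \<alpha> \<kappa> (y0 + h) (z0 + k)) UNIV"
    using boundary_double_series[of y0 z0] by auto
  show "\<exists>r>0. \<exists>coef. \<forall>h k. \<bar>h\<bar> < r \<and> \<bar>k\<bar> < r \<longrightarrow>
      ((\<lambda>(m, n). coef m n * h ^ m * k ^ n) has_sum boundary \<alpha> \<kappa> (y0 + h) (z0 + k)) UNIV"
  proof (intro exI[of _ "min r z0"] conjI exI[of _ coef] allI impI)
    show "min r z0 > 0" using \<open>r > 0\<close> \<open>z0 > 0\<close> by simp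
    fix h k :: real assume "\<bar>h\<bar> < min r z0 \<and> \<bar>k\<bar> < min r z0"
    then show "((\<lambda>(m, n). coef m n * h ^ m * k ^ n) has_sum boundary \<alpha> \<kappa> (y0 + h) (z0 + k)) UNIV"
      using series[of h k] by auto
  qed
qed

end

section \<open>The free boundary problem\<close>

lemma linear_ode_solution:
  fixes y' y'' :: "real \<Rightarrow> real"
  assumes deriv: "\<And>x. x \<in> {l<..<r} \<Longrightarrow> (y' has_real_derivative y'' x) (at x)"
    and ode: "\<And>x. x \<in> {l<..<r} \<Longrightarrow> y'' x = \<kappa> * (y' x - \<alpha>)"
  obtains K where "\<And>x. x \<in> {l<..<r} \<Longrightarrow> y' x = \<alpha> + K * exp (\<kappa> * x)"
proof -
  define u where "u x = (y' x - \<alpha>) * exp (- (\<kappa> * x))" for x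
  have "(u has_real_derivative 0) (at x within {l<..<r})" if x: "x \<in> {l<..<r}" for x
  proof -
    have "(u has_real_derivative (y'' x - \<kappa> * (y' x - \<alpha>)) * exp (- (\<kappa> * x))) (at x)"
      unfolding u_def [abs_def] by (auto intro!: derivative_eq_intros deriv[OF x] simp: algebra_simps)
    then show ?thesis using ode[OF x] by (auto intro: has_field_derivative_at_within)
  qed
  then obtain K where K: "\<And>x. x \<in> {l<..<r} \<Longrightarrow> u x = K"
    using has_field_derivative_zero_constant[OF convex_real_interval(8)] by blast
  show ?thesis
  proof (rule that)
    fix x assume "x \<in> {l<..<r}"
    then have "(y' x - \<alpha>) * exp (- (\<kappa> * x)) * exp (\<kappa> * x) = K * exp (\<kappa> * x)"
      using K by (simp add: u_def)
    then have "y' x - \<alpha> = K * exp (\<kappa> * x)" by (simp add: mult.assoc flip: exp_add)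
    then show "y' x = \<alpha> + K * exp (\<kappa> * x)" by simp
  qed
qed

lemma eq_on_Icc_if_same_derivative:
  fixes f g :: "real \<Rightarrow> real"
  assumes "continuous_on {a..b} f" "continuous_on {a..b} g"
    and "\<And>x. x \<in> {a<..<b} \<Longrightarrow> (f has_real_derivative f' x) (at x)"
    and "\<And>x. x \<in> {a<..<b} \<Longrightarrow> (g has_real_derivative f' x) (at x)"
    and "f a = g a" and x: "x \<in> {a..b}"
  shows "f x = g x"
proof (cases "x = a")
  case False
  then have "a < x" using x by simp
  then have "(\<lambda>t. f t - g t) x = (\<lambda>t. f t - g t) a"
  proof (rule DERIV_isconst_end)
    show "continuous_on {a..x} (\<lambda>t. f t - g t)"
      using x by (intro continuous_intros continuous_on_subset[OF assms(1)] continuous_on_subset[OF assms(2)]) auto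
    fix t assume "a < t" "t < x"
    then show "((\<lambda>t. f t - g t) has_real_derivative 0) (at t)"
      using assms(3,4)[of t] x by (auto intro: DERIV_diff[where E = "f' t" and D = "f' t", simplified])
  qed
  then show ?thesis using \<open>f a = g a\<close> by simp
qed (use \<open>f a = g a\<close> in simp)

definition profile :: "real \<Rightarrow> real \<Rightarrow> real \<Rightarrow> real \<Rightarrow> real \<Rightarrow> real \<Rightarrow> real" where
  "profile \<alpha> \<kappa> y0 z0 xh x = - y0 + \<alpha> * x + (z0 - \<alpha>) * exp (- (\<kappa> * xh)) * (exp (\<kappa> * x) - 1) / \<kappa>"

lemma profile_0 [simp]: "profile \<alpha> \<kappa> y0 z0 xh 0 = - y0"
  by (simp add: profile_def)

lemma profile_end: "\<kappa> \<noteq> 0 \<Longrightarrow> profile \<alpha> \<kappa> y0 z0 xh xh = y0_of \<alpha> \<kappa> z0 xh - y0"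
  by (simp add: profile_def y0_of_def phi_def exp_minus field_simps)

lemma has_real_derivative_profile:
  "\<kappa> \<noteq> 0 \<Longrightarrow> (profile \<alpha> \<kappa> y0 z0 xh has_real_derivative \<alpha> + (z0 - \<alpha>) * exp (\<kappa> * (x - xh))) (at x)"
  unfolding profile_def [abs_def]
  by (auto intro!: derivative_eq_intros simp: exp_diff exp_minus field_simps)

lemma linear_ode_eq_profile:
  fixes y y' y'' :: "real \<Rightarrow> real"
  assumes "\<kappa> \<noteq> 0" "xh > 0"
    and d1: "\<And>x. x \<in> {0..xh} \<Longrightarrow> (y has_real_derivative y' x) (at x within {0..xh})"
    and d2: "\<And>x. x \<in> {0<..<xh} \<Longrightarrow> (y' has_real_derivative y'' x) (at x)"
    and ode: "\<And>x. x \<in> {0<..<xh} \<Longrightarrow> y'' x = \<kappa> * (y' x - \<alpha>)"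
    and x: "x \<in> {0..xh}"
  shows "y x = profile \<alpha> \<kappa> (- y 0) (y' xh) xh x"
proof -
  obtain K where K: "\<And>x. x \<in> {0<..<xh} \<Longrightarrow> y' x = \<alpha> + K * exp (\<kappa> * x)"
    using linear_ode_solution[OF d2 ode] by blast
  define E where "E x = y 0 + \<alpha> * x + K / \<kappa> * (exp (\<kappa> * x) - 1)" for x
  have dE: "(E has_real_derivative \<alpha> + K * exp (\<kappa> * x)) (at x)" for x
    unfolding E_def [abs_def] using \<open>\<kappa> \<noteq> 0\<close> by (auto intro!: derivative_eq_intros)
  have yE: "y x = E x" if "x \<in> {0..xh}" for x
  proof (rule eq_on_Icc_if_same_derivative[OF _ _ _ _ _ that])
    show "continuous_on {0..xh} y" by (rule DERIV_continuous_on[OF d1])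
    show "continuous_on {0..xh} E" using dE by (meson DERIV_continuous continuous_at_imp_continuous_on)
    fix x assume x: "x \<in> {0<..<xh}"
    show "(y has_real_derivative \<alpha> + K * exp (\<kappa> * x)) (at x)"
      using d1[of x] K[OF x] x by (simp add: at_within_Icc_at)
    show "(E has_real_derivative \<alpha> + K * exp (\<kappa> * x)) (at x)" by (rule dE)
  qed (simp add: E_def)
  have "(y has_real_derivative \<alpha> + K * exp (\<kappa> * xh)) (at xh within {0..xh})"
    by (rule has_field_derivative_transform_within[OF has_field_derivative_at_within[OF dE], where d = 1])
       (use \<open>xh > 0\<close> yE in auto)
  moreover have "(y has_real_derivative y' xh) (at xh within {0..xh})"
    using d1[of xh] \<open>xh > 0\<close> by simp
  moreover have "at xh within {0..xh} \<noteq> bot"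
    using \<open>xh > 0\<close> by (simp add: at_within_Icc_at_left)
  ultimately have "\<alpha> + K * exp (\<kappa> * xh) = y' xh"
    by (rule has_field_derivative_unique)
  then have K_eq: "K = (y' xh - \<alpha>) * exp (- (\<kappa> * xh))" by (simp add: exp_minus field_simps)
  show ?thesis
    using yE[OF x] \<open>\<kappa> \<noteq> 0\<close> unfolding E_def profile_def K_eq by (simp add: field_simps)
qed

locale fbp_setting = boundary_params \<alpha> \<kappa> for \<alpha> \<kappa> :: real +
  fixes a b c :: real
  assumes a_pos: "a > 0" and alpha_eq: "\<alpha> = c / b" and kappa_eq: "\<kappa> = b / a"
begin

lemma ode_iff: "b * y' - a * y'' - c = 0 \<longleftrightarrow> y'' = \<kappa> * (y' - \<alpha>)"
proof -
  have "b = \<kappa> * a" "c = \<alpha> * \<kappa> * a"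
    using a_pos kappa_pos alpha_eq kappa_eq by auto
  then have "b * y' - a * y'' - c = a * (\<kappa> * (y' - \<alpha>) - y'')"
    by (simp add: algebra_simps)
  then show ?thesis using a_pos by auto
qed

lemma fbp_solution_profile:
  assumes "xh > 0" "y0_of \<alpha> \<kappa> z0 xh = y0"
  shows "fbp_solution a b c y0 z0 (profile \<alpha> \<kappa> y0 z0 xh) xh"
proof -
  define y' where "y' x = \<alpha> + (z0 - \<alpha>) * exp (\<kappa> * (x - xh))" for x
  define y'' where "y'' x = \<kappa> * (z0 - \<alpha>) * exp (\<kappa> * (x - xh))" for x
  have "(y' has_real_derivative y'' x) (at x)" for x
    unfolding y'_def [abs_def] y''_def by (auto intro!: derivative_eq_intros)
  moreover have "b * y' x - a * y'' x - c = 0" for x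
    unfolding ode_iff by (simp add: y'_def y''_def algebra_simps)
  ultimately show ?thesis
    unfolding fbp_solution_def using assms kappa_pos
    by (intro conjI exI[of _ y'] exI[of _ y''])
       (auto intro: has_field_derivative_at_within simp: has_real_derivative_profile profile_end y'_def)
qed

lemma fbp_solution_imp_profile:
  assumes "fbp_solution a b c y0 z0 y xh"
  shows "xh > 0" "y0_of \<alpha> \<kappa> z0 xh = y0" "\<And>x. x \<in> {0..xh} \<Longrightarrow> y x = profile \<alpha> \<kappa> y0 z0 xh x"
proof -
  obtain y' y'' where xh: "xh > 0"
    and d1: "\<And>x. x \<in> {0..xh} \<Longrightarrow> (y has_real_derivative y' x) (at x within {0..xh})"
    and d2: "\<And>x. x \<in> {0<..<xh} \<Longrightarrow> (y' has_real_derivative y'' x) (at x)"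
    and ode: "\<And>x. x \<in> {0<..<xh} \<Longrightarrow> b * y' x - a * y'' x - c = 0"
    and "y xh = 0" "y 0 = - y0" "y' xh = z0"
    using assms unfolding fbp_solution_def by blast
  have "y'' x = \<kappa> * (y' x - \<alpha>)" if "x \<in> {0<..<xh}" for x
    using ode[OF that] unfolding ode_iff .
  then have y: "y x = profile \<alpha> \<kappa> y0 z0 xh x" if "x \<in> {0..xh}" for x
    using linear_ode_eq_profile[OF _ xh d1 d2 _ that] kappa_pos \<open>y 0 = - y0\<close> \<open>y' xh = z0\<close> by simp
  show "xh > 0" "\<And>x. x \<in> {0..xh} \<Longrightarrow> y x = profile \<alpha> \<kappa> y0 z0 xh x"
    using xh y by auto
  show "y0_of \<alpha> \<kappa> z0 xh = y0"
    using y[of xh] xh \<open>y xh = 0\<close> profile_end[of \<kappa>] kappa_pos by simp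
qed

lemma fbp_solution_boundary:
  assumes "y0 > 0" "z0 \<ge> 0"
  shows "fbp_solution a b c y0 z0 (profile \<alpha> \<kappa> y0 z0 (boundary \<alpha> \<kappa> y0 z0)) (boundary \<alpha> \<kappa> y0 z0)"
  using assms by (intro fbp_solution_profile boundary_root)

lemma fbp_solution_unique:
  assumes "z0 \<ge> 0" "fbp_solution a b c y0 z0 y1 x1" "fbp_solution a b c y0 z0 y2 x2"
  shows "x1 = x2 \<and> (\<forall>x\<in>{0..x1}. y1 x = y2 x)"
proof -
  have "x1 = x2"
    using fbp_solution_imp_profile[OF assms(2)] fbp_solution_imp_profile[OF assms(3)]
      y0_of_eq_iff[OF assms(1), of x1 x2] by simp
  then show ?thesis
    using fbp_solution_imp_profile(3)[OF assms(2)] fbp_solution_imp_profile(3)[OF assms(3)] by simp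
qed

lemma xhat_eq_boundary:
  assumes "y0 > 0" "z0 \<ge> 0"
  shows "xhat a b c y0 z0 = boundary \<alpha> \<kappa> y0 z0"
  unfolding xhat_def
  using fbp_solution_boundary[OF assms] fbp_solution_unique[OF assms(2)] by blast

lemma strict_mono_on_xhat: "z0 \<ge> 0 \<Longrightarrow> strict_mono_on {0<..} (\<lambda>y0. xhat a b c y0 z0)"
  using strict_mono_on_boundary by (auto simp: strict_mono_on_def xhat_eq_boundary)

lemma xhat_strict_antimono: "y0 > 0 \<Longrightarrow> 0 \<le> z1 \<Longrightarrow> z1 < z2 \<Longrightarrow> xhat a b c y0 z2 < xhat a b c y0 z1"
  using boundary_strict_antimono[of y0 z1 z2] by (simp add: xhat_eq_boundary)

lemma filterlim_xhat_at_top: "z0 \<ge> 0 \<Longrightarrow> filterlim (\<lambda>y0. xhat a b c y0 z0) at_top at_top"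
  using filterlim_boundary_at_top
  by (rule filterlim_cong[THEN iffD1, OF refl refl, rotated])
     (auto intro: eventually_mono[OF eventually_gt_at_top[of 0]] simp: xhat_eq_boundary)

lemma xhat_tendsto_0_at_right: "z0 \<ge> 0 \<Longrightarrow> ((\<lambda>y0. xhat a b c y0 z0) \<longlongrightarrow> 0) (at_right 0)"
  using boundary_tendsto_0_at_right
  by (rule tendsto_cong[THEN iffD1, rotated])
     (auto intro: eventually_mono[OF eventually_at_right_less] simp: xhat_eq_boundary)

lemma xhat_tendsto_0_at_top: "y0 > 0 \<Longrightarrow> ((\<lambda>z0. xhat a b c y0 z0) \<longlongrightarrow> 0) at_top"
  using boundary_tendsto_0_at_top
  by (rule tendsto_cong[THEN iffD1, rotated])
     (auto intro: eventually_mono[OF eventually_gt_at_top[of 0]] simp: xhat_eq_boundary)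

lemma xhat_tendsto_at_right_slope:
  "y0 > 0 \<Longrightarrow> ((\<lambda>z0. xhat a b c y0 z0) \<longlongrightarrow> boundary \<alpha> \<kappa> y0 0) (at_right 0)"
  using boundary_tendsto_at_right_slope
  by (rule tendsto_cong[THEN iffD1, rotated])
     (auto intro: eventually_mono[OF eventually_at_right_less] simp: xhat_eq_boundary)

lemma real_analytic2_on_xhat: "real_analytic2_on (\<lambda>y0 z0. xhat a b c y0 z0) ({0<..} \<times> {0<..})"
  using real_analytic2_on_boundary
  by (rule real_analytic2_on_cong) (auto simp: open_Times xhat_eq_boundary)

end

theorem lemma4p2:
  fixes a b c :: real
  assumes "a > 0" and "b > 0" and "c > 0"
  shows
    "(\<forall>y0>0. \<forall>z0>0.
        (\<exists>y xh. fbp_solution a b c y0 z0 y xh) \<and>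
        (\<forall>y1 x1 y2 x2. fbp_solution a b c y0 z0 y1 x1 \<and> fbp_solution a b c y0 z0 y2 x2
            \<longrightarrow> x1 = x2 \<and> (\<forall>x\<in>{0..x1}. y1 x = y2 x)))
   \<and> (\<forall>z0>0. strict_mono_on {0<..} (\<lambda>y0. xhat a b c y0 z0))
   \<and> (\<forall>y0>0. \<forall>z1 z2. 0 < z1 \<and> z1 < z2 \<longrightarrow> xhat a b c y0 z2 < xhat a b c y0 z1)
   \<and> (\<forall>z0>0. filterlim (\<lambda>y0. xhat a b c y0 z0) at_top at_top)
   \<and> (\<forall>z0>0. ((\<lambda>y0. xhat a b c y0 z0) \<longlongrightarrow> 0) (at_right 0))
   \<and> (\<forall>y0>0. ((\<lambda>z0. xhat a b c y0 z0) \<longlongrightarrow> 0) at_top)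
   \<and> (\<exists>xc :: real \<Rightarrow> real.
        (\<forall>y0>0. xc y0 > 0)
      \<and> (\<forall>y0>0. ((\<lambda>z0. xhat a b c y0 z0) \<longlongrightarrow> xc y0) (at_right 0))
      \<and> strict_mono_on {0<..} xc
      \<and> (xc \<longlongrightarrow> 0) (at_right 0)
      \<and> filterlim xc at_top at_top
      \<and> real_analytic_on xc {0<..})
   \<and> real_analytic2_on (\<lambda>y0 z0. xhat a b c y0 z0) ({0<..} \<times> {0<..})"
proof -
  interpret fbp_setting "c / b" "b / a" a b c
    using assms by unfold_locales auto
  have "\<exists>y xh. fbp_solution a b c y0 z0 y xh" if "y0 > 0" "z0 \<ge> 0" for y0 z0
    using fbp_solution_boundary[OF that] by blast
  moreover note fbp_solution_unique
  moreover have "\<exists>xc. (\<forall>y0>0. xc y0 > 0)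
      \<and> (\<forall>y0>0. ((\<lambda>z0. xhat a b c y0 z0) \<longlongrightarrow> xc y0) (at_right 0))
      \<and> strict_mono_on {0<..} xc \<and> (xc \<longlongrightarrow> 0) (at_right 0)
      \<and> filterlim xc at_top at_top \<and> real_analytic_on xc {0<..}"
    using boundary_pos xhat_tendsto_at_right_slope strict_mono_on_boundary boundary_tendsto_0_at_right
      filterlim_boundary_at_top real_analytic_on_boundary
    by (intro exI[of _ "\<lambda>y0. boundary (c / b) (b / a) y0 0"]) auto
  ultimately show ?thesis
    using strict_mono_on_xhat xhat_strict_antimono filterlim_xhat_at_top xhat_tendsto_0_at_right
      xhat_tendsto_0_at_top real_analytic2_on_xhat
    by (simp add: less_imp_le) (meson less_imp_le)
qed

end
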